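(* Let $H$ be a real $d\times d$ matrix partitioned into blocks $(H_{ij})_{1\le i,j\le n}$ with $H_{ij}\in\mathbb{R}^{d_i\times d_j}$, $\sum_i d_i=d$. Let $S=(H+H^\top)/2$ be its symmetric part and $H_d=\bigoplus_i H_{ii}$ the block-diagonal matrix formed by its diagonal blocks. For a square matrix $A$ write $\lambda(A)=\mathrm{Re}(\mathrm{Spec}(A))$ for the set of real parts of its eigenvalues. Then the following implications hold: (1) $H\prec 0\Rightarrow \max\lambda(H)<0$; (2) $H\prec 0\Rightarrow \max\lambda(H_d)<0$; (3) $\max\lambda(H)<0\Rightarrow\min\lambda(H)<0$; (4) $\max\lambda(H_d)<0\Rightarrow\min\lambda(H_d)<0$; (5) $\max\lambda(H)<0\Rightarrow \min\lambda(H_d)<0$; (6) $\max\lambda(H_d)<0\Rightarrow\min\lambda(H)<0$; (7) $\min\lambda(H)<0\Rightarrow\min\lambda(S)<0$; (8) $\min\lambda(H_d)<0\Rightarrow\min\lambda(S)<0$. Moreover, none of these implications is an equivalence: for each of them there exists such a partitioned matrix $H$ for which the conclusion holds but the hypothesis fails.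
   Context: For a (not necessarily symmetric) real square matrix $H$, $H\prec 0$ means $u^\top H u<0$ for all nonzero $u$ (equivalently, the symmetric part of $H$ is negative definite). *)

theory Defs
  imports Complex_Main "Jordan_Normal_Form.Char_Poly"
begin

text \<open>Block partition of a d x d matrix given by the list ds = [d_1,...,d_n] of block sizes.\<close>

definition block_offset :: "nat list \<Rightarrow> nat \<Rightarrow> nat" where
  "block_offset ds i = sum_list (take i ds)"

definition same_block :: "nat list \<Rightarrow> nat \<Rightarrow> nat \<Rightarrow> bool" where
  "same_block ds r c \<longleftrightarrow> (\<exists>i<length ds.
      block_offset ds i \<le> r \<and> r < block_offset ds (Suc i) \<and>
      block_offset ds i \<le> c \<and> c < block_offset ds (Suc i))"

definition partitioned :: "nat list \<Rightarrow> real mat \<Rightarrow> bool" where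
  "partitioned ds H \<longleftrightarrow> ds \<noteq> [] \<and> (\<forall>k\<in>set ds. 0 < k) \<and>
     H \<in> carrier_mat (sum_list ds) (sum_list ds)"

definition block_diag_part :: "nat list \<Rightarrow> real mat \<Rightarrow> real mat" where
  "block_diag_part ds H = mat (dim_row H) (dim_col H)
     (\<lambda>(r, c). if same_block ds r c then H $$ (r, c) else 0)"

definition sym_part :: "real mat \<Rightarrow> real mat" where
  "sym_part H = (1/2 :: real) \<cdot>\<^sub>m (H + transpose_mat H)"

definition neg_def :: "real mat \<Rightarrow> bool" where
  "neg_def H \<longleftrightarrow> (\<forall>u \<in> carrier_vec (dim_row H). u \<noteq> 0\<^sub>v (dim_row H) \<longrightarrow> u \<bullet> (H *\<^sub>v u) < 0)"

definition spec :: "real mat \<Rightarrow> complex set" where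
  "spec A = {k. eigenvalue (map_mat complex_of_real A) k}"

definition lam :: "real mat \<Rightarrow> real set" where
  "lam A = Re ` spec A"

definition max_lam :: "real mat \<Rightarrow> real" where
  "max_lam A = Max (lam A)"

definition min_lam :: "real mat \<Rightarrow> real" where
  "min_lam A = Min (lam A)"

end

(*
  For an eigenvalue mu of a real matrix A with eigenvector a + i b one has
  a^T A a + b^T A b = Re mu (|a|^2 + |b|^2).  Hence H < 0 forces every eigenvalue of H to
  have negative real part, and the same holds for H_d, since H_d < 0 blockwise.  Conversely,
  an eigenvalue with negative real part of H, or of H_d after restricting to one block, yields
  a vector u with u^T H u = u^T S u < 0, and the symmetric matrix S then has a negative
  eigenvalue, namely the minimum of its Rayleigh quotient.  Implications (5) and (6) follow
  from tr H = tr H_d, the trace being the sum of the eigenvalues.  None of the converses holds,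
  as already 2 x 2 upper triangular matrices, split into two 1 x 1 blocks, show: their spectra
  and those of their diagonal parts are read off the diagonal.
*)
theory Submission
  imports Defs "Jordan_Normal_Form.Schur_Decomposition" "Jordan_Normal_Form.Spectral_Radius"
    "HOL-Analysis.Analysis"
begin

unbundle no vec_syntax
no_notation inner (infix "\<bullet>" 70)

section \<open>Quadratic forms\<close>

definition quad_form :: "real mat \<Rightarrow> (nat \<Rightarrow> real) \<Rightarrow> real" where
  "quad_form A x = (\<Sum>i<dim_row A. \<Sum>j<dim_row A. x i * A $$ (i, j) * x j)"

definition sum_squares :: "nat \<Rightarrow> (nat \<Rightarrow> real) \<Rightarrow> real" where
  "sum_squares n x = (\<Sum>i<n. (x i)\<^sup>2)"

lemma sum_squares_nonneg: "0 \<le> sum_squares n x"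
  unfolding sum_squares_def by (simp add: sum_nonneg)

lemma sum_squares_eq_0_iff: "sum_squares n x = 0 \<longleftrightarrow> (\<forall>i<n. x i = 0)"
  unfolding sum_squares_def by (subst sum_nonneg_eq_0_iff) auto

lemma sum_squares_scale: "sum_squares n (\<lambda>i. c * x i) = c\<^sup>2 * sum_squares n x"
  unfolding sum_squares_def by (simp add: sum_distrib_left power_mult_distrib)

lemma quad_form_scale: "quad_form A (\<lambda>i. c * x i) = c\<^sup>2 * quad_form A x"
  unfolding quad_form_def by (simp add: sum_distrib_left power2_eq_square algebra_simps)

lemma quad_form_cong: "(\<And>i. i < dim_row A \<Longrightarrow> x i = y i) \<Longrightarrow> quad_form A x = quad_form A y"
  unfolding quad_form_def by (intro sum.cong refl) auto

lemma quad_form_eq_0: "(\<And>i. i < dim_row A \<Longrightarrow> x i = 0) \<Longrightarrow> quad_form A x = 0"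
  unfolding quad_form_def by simp

lemma scalar_prod_mult_mat_vec_eq_quad_form:
  assumes "A \<in> carrier_mat n n" and "u \<in> carrier_vec n"
  shows "u \<bullet> (A *\<^sub>v u) = quad_form A (\<lambda>i. u $ i)"
  using assms unfolding quad_form_def
  by (simp add: scalar_prod_def mult_mat_vec_def row_def lessThan_atLeast0 sum_distrib_left mult.assoc)

lemma quad_form_sym_part:
  assumes A: "A \<in> carrier_mat n n"
  shows "quad_form (sym_part A) x = quad_form A x"
proof -
  have swap: "(\<Sum>i<n. \<Sum>j<n. x i * A $$ (j, i) * x j) = (\<Sum>i<n. \<Sum>j<n. x i * A $$ (i, j) * x j)"
    by (subst sum.swap) (simp add: mult.commute mult.left_commute)
  have "quad_form (sym_part A) x =
      (\<Sum>i<n. \<Sum>j<n. (x i * A $$ (i, j) * x j + x i * A $$ (j, i) * x j) / 2)"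
    unfolding quad_form_def sym_part_def using A
    by (intro sum.cong) (auto simp: field_simps)
  also have "\<dots> = ((\<Sum>i<n. \<Sum>j<n. x i * A $$ (i, j) * x j) + (\<Sum>i<n. \<Sum>j<n. x i * A $$ (j, i) * x j)) / 2"
    by (simp only: sum_divide_distrib[symmetric] sum.distrib)
  also have "\<dots> = quad_form A x"
    unfolding swap quad_form_def using A by simp
  finally show ?thesis .
qed

lemma neg_defD:
  assumes A: "A \<in> carrier_mat n n" and "neg_def A" and "\<exists>i<n. x i \<noteq> 0"
  shows "quad_form A x < 0"
proof -
  define u where "u = Matrix.vec n x"
  obtain i where i: "i < n" "x i \<noteq> 0"
    using assms(3) by blast
  hence "u $ i \<noteq> 0\<^sub>v n $ i"
    unfolding u_def by simp
  hence u: "u \<in> carrier_vec n" "u \<noteq> 0\<^sub>v n"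
    unfolding u_def by auto
  have "u \<bullet> (A *\<^sub>v u) < 0"
    using assms(2) u A unfolding neg_def_def by auto
  also have "u \<bullet> (A *\<^sub>v u) = quad_form A x"
    unfolding scalar_prod_mult_mat_vec_eq_quad_form[OF A u(1)] using A
    by (intro quad_form_cong) (simp add: u_def)
  finally show ?thesis .
qed

lemma neg_defI:
  assumes A: "A \<in> carrier_mat n n" and neg: "\<And>x. \<exists>i<n. x i \<noteq> 0 \<Longrightarrow> quad_form A x < 0"
  shows "neg_def A"
  unfolding neg_def_def
proof (intro ballI impI)
  fix u :: "real Matrix.vec" assume u: "u \<in> carrier_vec (dim_row A)" "u \<noteq> 0\<^sub>v (dim_row A)"
  hence "\<exists>i<n. u $ i \<noteq> 0"
    using A by (metis carrier_matD(1) carrier_vecD eq_vecI index_zero_vec)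
  thus "u \<bullet> (A *\<^sub>v u) < 0"
    using u A by (simp add: scalar_prod_mult_mat_vec_eq_quad_form neg)
qed

lemma neg_def_quad_form_nonpos:
  assumes "A \<in> carrier_mat n n" and "neg_def A"
  shows "quad_form A x \<le> 0"
  using neg_defD[OF assms, of x] quad_form_eq_0[of A x] assms(1)
  by force

section \<open>The Rayleigh quotient of a symmetric matrix\<close>

lemma quad_form_attains_min_on_sphere:
  assumes n: "0 < dim_row A"
  shows "\<exists>x. sum_squares (dim_row A) x = 1 \<and>
    (\<forall>y. sum_squares (dim_row A) y = 1 \<longrightarrow> quad_form A x \<le> quad_form A y)"
proof -
  let ?n = "dim_row A"
  define K where "K = (\<Pi>\<^sub>E i\<in>UNIV. if i < ?n then {-1..1} else {0}) \<inter> {x. sum_squares ?n x = 1}"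
  have "\<forall>i. compact (if i < ?n then {-1..1::real} else {0})"
    by simp
  hence "compact (\<Pi>\<^sub>E i\<in>UNIV. if i < ?n then {-1..1::real} else {0})"
    using compactin_PiE[of "\<lambda>_. euclidean" UNIV "\<lambda>i. if i < ?n then {-1..1} else {0}"]
    by (simp add: euclidean_product_topology) blast
  moreover have "closed {x. sum_squares ?n x = 1}"
    unfolding sum_squares_def
    by (intro closed_Collect_eq continuous_intros continuous_on_product_coordinates)
  ultimately have "compact K"
    unfolding K_def by blast
  moreover have "(\<lambda>i. if i = 0 then 1 else 0) \<in> K"
    using n unfolding K_def sum_squares_def
    by (auto simp: PiE_def extensional_def if_distrib[of "\<lambda>x. x\<^sup>2"] cong: if_cong)
  moreover have "continuous_on K (quad_form A)"
    unfolding quad_form_def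
    by (intro continuous_intros continuous_on_subset[OF continuous_on_product_coordinates]) auto
  ultimately obtain x where x: "x \<in> K" and min: "\<And>y. y \<in> K \<Longrightarrow> quad_form A x \<le> quad_form A y"
    using continuous_attains_inf[of K "quad_form A"] by blast
  have "quad_form A x \<le> quad_form A y" if y: "sum_squares ?n y = 1" for y
  proof -
    define y' where "y' i = (if i < ?n then y i else 0)" for i
    have "\<bar>y i\<bar> \<le> 1" if "i < ?n" for i
    proof -
      have "(y i)\<^sup>2 \<le> sum_squares ?n y"
        unfolding sum_squares_def by (rule member_le_sum) (use that in auto)
      thus ?thesis
        using y abs_le_square_iff[of "y i" 1] by simp
    qed
    moreover have "sum_squares ?n y' = 1"
      using y unfolding sum_squares_def y'_def by simp
    ultimately have "y' \<in> K"
      unfolding K_def y'_def by (auto simp: PiE_def extensional_def abs_le_iff)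
    hence "quad_form A x \<le> quad_form A y'"
      by (rule min)
    also have "quad_form A y' = quad_form A y"
      by (intro quad_form_cong) (simp add: y'_def)
    finally show ?thesis .
  qed
  thus ?thesis
    using x unfolding K_def by blast
qed

lemma quad_form_ge_min_on_sphere:
  assumes n: "dim_row A = n" and min: "\<And>y. sum_squares n y = 1 \<Longrightarrow> m \<le> quad_form A y"
  shows "m * sum_squares n x \<le> quad_form A x"
proof (cases "sum_squares n x = 0")
  case True
  moreover have "quad_form A x = 0"
    using True n by (simp add: sum_squares_eq_0_iff quad_form_eq_0)
  ultimately show ?thesis
    by simp
next
  case False
  define s where "s = sum_squares n x"
  have s: "0 < s"
    using False sum_squares_nonneg[of n x] unfolding s_def by linarith
  define c where "c = 1 / sqrt s"
  have c: "c\<^sup>2 = 1 / s"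
    unfolding c_def using s by (simp add: power_divide)
  have "m \<le> quad_form A (\<lambda>i. c * x i)"
    using c s by (intro min) (simp add: sum_squares_scale s_def)
  hence "m \<le> quad_form A x / s"
    by (simp add: quad_form_scale c)
  thus ?thesis
    using s unfolding s_def[symmetric] by (simp add: field_simps)
qed

lemma linear_coeff_eq_0_if_quadratic_nonneg:
  fixes B C :: real
  assumes "\<And>t. 0 \<le> t * B + t\<^sup>2 * C"
  shows "B = 0"
proof -
  have "((\<lambda>t. t * B + t\<^sup>2 * C) has_real_derivative B) (at 0)"
    by (auto intro!: derivative_eq_intros)
  thus ?thesis
    by (rule DERIV_local_min[where d = 1]) (simp_all add: assms)
qed

lemma symmetric_matD:
  assumes "A \<in> carrier_mat n n" and "transpose_mat A = A" and "i < n" and "j < n"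
  shows "A $$ (i, j) = A $$ (j, i)"
  by (metis assms index_transpose_mat(1) carrier_matD)

lemma quad_form_add_scaled:
  assumes A: "A \<in> carrier_mat n n" and sym: "transpose_mat A = A"
  shows "quad_form A (\<lambda>i. x i + t * z i) = quad_form A x
    + 2 * t * (\<Sum>i<n. z i * (\<Sum>j<n. A $$ (i, j) * x j)) + t\<^sup>2 * quad_form A z"
proof -
  have swap: "(\<Sum>i<n. \<Sum>j<n. x i * A $$ (i, j) * z j) = (\<Sum>i<n. \<Sum>j<n. z i * A $$ (i, j) * x j)"
    by (subst sum.swap) (intro sum.cong refl, simp add: symmetric_matD[OF A sym] mult.commute)
  have "quad_form A (\<lambda>i. x i + t * z i) = quad_form A x
      + t * (\<Sum>i<n. \<Sum>j<n. z i * A $$ (i, j) * x j) + t * (\<Sum>i<n. \<Sum>j<n. x i * A $$ (i, j) * z j)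
      + t\<^sup>2 * quad_form A z"
    using A unfolding quad_form_def
    by (simp add: sum.distrib sum_distrib_left algebra_simps power2_eq_square)
  also have "(\<Sum>i<n. \<Sum>j<n. z i * A $$ (i, j) * x j) = (\<Sum>i<n. z i * (\<Sum>j<n. A $$ (i, j) * x j))"
    by (simp add: sum_distrib_left mult.assoc)
  finally show ?thesis
    unfolding swap by (simp add: sum_distrib_left mult.assoc)
qed

lemma sum_squares_add_scaled:
  "sum_squares n (\<lambda>i. x i + t * z i) = sum_squares n x
    + 2 * t * (\<Sum>i<n. z i * x i) + t\<^sup>2 * sum_squares n z"
  unfolding sum_squares_def
  by (simp add: sum.distrib sum_distrib_left algebra_simps power2_eq_square)

text \<open>Moving a minimiser \<open>x\<close> along its residual \<open>A x - m x\<close> would otherwise decrease the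
  Rayleigh quotient to first order.\<close>

lemma rayleigh_minimizer_eigenvector:
  assumes A: "A \<in> carrier_mat n n" and sym: "transpose_mat A = A"
    and min: "\<And>y. m * sum_squares n y \<le> quad_form A y"
    and eq: "quad_form A x = m * sum_squares n x"
    and i: "i < n"
  shows "(\<Sum>j<n. A $$ (i, j) * x j) = m * x i"
proof -
  define z where "z i = (\<Sum>j<n. A $$ (i, j) * x j) - m * x i" for i
  have "(\<Sum>i<n. z i * (\<Sum>j<n. A $$ (i, j) * x j)) - m * (\<Sum>i<n. z i * x i) = (\<Sum>i<n. z i * z i)"
    unfolding z_def by (simp add: right_diff_distrib sum_subtractf sum_distrib_left ac_simps)
  hence residual: "(\<Sum>i<n. z i * (\<Sum>j<n. A $$ (i, j) * x j)) - m * (\<Sum>i<n. z i * x i) = sum_squares n z"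
    unfolding sum_squares_def by (simp add: power2_eq_square)
  have "0 \<le> t * (2 * sum_squares n z) + t\<^sup>2 * (quad_form A z - m * sum_squares n z)" for t
  proof -
    have "0 \<le> quad_form A (\<lambda>i. x i + t * z i) - m * sum_squares n (\<lambda>i. x i + t * z i)"
      using min by simp
    also have "\<dots> = t * (2 * sum_squares n z) + t\<^sup>2 * (quad_form A z - m * sum_squares n z)"
      unfolding quad_form_add_scaled[OF A sym] sum_squares_add_scaled eq residual[symmetric]
      by (simp add: algebra_simps)
    finally show ?thesis .
  qed
  hence "sum_squares n z = 0"
    using linear_coeff_eq_0_if_quadratic_nonneg by fastforce
  thus ?thesis
    using i unfolding sum_squares_eq_0_iff z_def by simp
qed

lemma eigenvalueI_coordinates:
  fixes A :: "'a :: comm_ring_1 mat"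
  assumes A: "A \<in> carrier_mat n n" and nz: "\<exists>i<n. x i \<noteq> 0"
    and eig: "\<And>i. i < n \<Longrightarrow> (\<Sum>j<n. A $$ (i, j) * x j) = m * x i"
  shows "eigenvalue A m"
proof -
  define v where "v = Matrix.vec n x"
  obtain i where i: "i < n" "x i \<noteq> 0"
    using nz by blast
  hence "v $ i \<noteq> 0\<^sub>v n $ i"
    unfolding v_def by simp
  hence "v \<noteq> 0\<^sub>v n"
    by auto
  moreover have "A *\<^sub>v v = m \<cdot>\<^sub>v v"
    using A eig unfolding v_def
    by (intro eq_vecI) (auto simp: mult_mat_vec_def scalar_prod_def row_def lessThan_atLeast0)
  moreover have "v \<in> carrier_vec n"
    unfolding v_def by simp
  ultimately show ?thesis
    using A unfolding eigenvalue_def eigenvector_def by auto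
qed

lemma symmetric_quad_form_neg_imp_neg_eigenvalue:
  assumes A: "A \<in> carrier_mat n n" and sym: "transpose_mat A = A" and w: "quad_form A w < 0"
  shows "\<exists>m<0. eigenvalue A m"
proof -
  have "0 < dim_row A"
    using w by (cases "dim_row A") (auto simp: quad_form_def)
  then obtain x where x: "sum_squares n x = 1"
      and min: "\<And>y. sum_squares n y = 1 \<Longrightarrow> quad_form A x \<le> quad_form A y"
    using quad_form_attains_min_on_sphere[of A] A by auto
  define m where "m = quad_form A x"
  have bound: "m * sum_squares n y \<le> quad_form A y" for y
    using A min unfolding m_def by (intro quad_form_ge_min_on_sphere) auto
  have "m < 0"
  proof (rule ccontr)
    assume "\<not> m < 0"
    hence "0 \<le> m * sum_squares n w"
      by (simp add: sum_squares_nonneg)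
    thus False
      using bound[of w] w by linarith
  qed
  moreover have "eigenvalue A m"
  proof (rule eigenvalueI_coordinates[OF A])
    show "\<exists>i<n. x i \<noteq> 0"
      using x sum_squares_eq_0_iff[of n x] by auto
    show "(\<Sum>j<n. A $$ (i, j) * x j) = m * x i" if "i < n" for i
      using rayleigh_minimizer_eigenvector[OF A sym bound _ that] x unfolding m_def by simp
  qed
  ultimately show ?thesis
    by blast
qed

section \<open>Eigenvalues and quadratic forms\<close>

lemma eigenvalue_Re_quad_form:
  assumes A: "A \<in> carrier_mat n n" and ev: "eigenvalue (map_mat complex_of_real A) \<mu>"
  obtains a b where "\<exists>i<n. a i \<noteq> 0 \<or> b i \<noteq> 0"
    and "quad_form A a + quad_form A b = Re \<mu> * (sum_squares n a + sum_squares n b)"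
proof -
  obtain v where v: "v \<in> carrier_vec n" "v \<noteq> 0\<^sub>v n" "map_mat complex_of_real A *\<^sub>v v = \<mu> \<cdot>\<^sub>v v"
    using ev A unfolding eigenvalue_def eigenvector_def by auto
  define a where "a i = Re (v $ i)" for i
  define b where "b i = Im (v $ i)" for i
  have row: "(\<Sum>j<n. complex_of_real (A $$ (i, j)) * v $ j) = \<mu> * v $ i" if "i < n" for i
    using arg_cong[OF v(3), of "\<lambda>w. w $ i"] that A v(1)
    by (simp add: mult_mat_vec_def scalar_prod_def row_def lessThan_atLeast0)
  have Re_form: "Re (cnj z * (complex_of_real r * w)) = Re z * r * Re w + Im z * r * Im w" for z w r
    by simp
  have Re_eig: "Re (cnj z * (\<mu> * z)) = Re \<mu> * ((Re z)\<^sup>2 + (Im z)\<^sup>2)" for z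
    by (simp add: algebra_simps power2_eq_square)
  (* both sides are the real part of the Hermitian form v^* A v *)
  have "quad_form A a + quad_form A b
      = (\<Sum>i<n. \<Sum>j<n. Re (cnj (v $ i) * (complex_of_real (A $$ (i, j)) * v $ j)))"
    using A unfolding quad_form_def Re_form a_def b_def by (simp add: sum.distrib)
  also have "\<dots> = Re (\<Sum>i<n. cnj (v $ i) * (\<Sum>j<n. complex_of_real (A $$ (i, j)) * v $ j))"
    by (simp only: Re_sum sum_distrib_left)
  also have "\<dots> = Re (\<Sum>i<n. cnj (v $ i) * (\<mu> * v $ i))"
    by (simp add: row)
  also have "\<dots> = Re \<mu> * (sum_squares n a + sum_squares n b)"
    unfolding Re_sum Re_eig sum_squares_def a_def b_def by (simp only: sum.distrib[symmetric] sum_distrib_left)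
  finally have "quad_form A a + quad_form A b = Re \<mu> * (sum_squares n a + sum_squares n b)" .
  moreover have "\<exists>i<n. a i \<noteq> 0 \<or> b i \<noteq> 0"
  proof (rule ccontr)
    assume "\<not> ?thesis"
    hence "v = 0\<^sub>v n"
      using v(1) unfolding a_def b_def by (intro eq_vecI) (auto simp: complex_eq_iff)
    thus False
      using v(2) by simp
  qed
  ultimately show ?thesis
    using that by blast
qed

lemma spec_Re_neg_imp_quad_form_neg:
  assumes A: "A \<in> carrier_mat n n" and "\<mu> \<in> spec A" and "Re \<mu> < 0"
  shows "\<exists>x. quad_form A x < 0"
proof -
  obtain a b where nz: "\<exists>i<n. a i \<noteq> 0 \<or> b i \<noteq> 0"
    and eq: "quad_form A a + quad_form A b = Re \<mu> * (sum_squares n a + sum_squares n b)"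
    using eigenvalue_Re_quad_form[OF A] assms(2) unfolding spec_def by blast
  have "0 < sum_squares n a + sum_squares n b"
    using nz sum_squares_nonneg[of n a] sum_squares_nonneg[of n b] sum_squares_eq_0_iff
    by (metis add_nonneg_nonneg add_nonneg_eq_0_iff order_less_le)
  hence "quad_form A a + quad_form A b < 0"
    using eq assms(3) by (simp add: mult_neg_pos)
  hence "quad_form A a < 0 \<or> quad_form A b < 0"
    by linarith
  thus ?thesis
    by auto
qed

lemma neg_def_imp_spec_Re_neg:
  assumes A: "A \<in> carrier_mat n n" and nd: "neg_def A" and "\<mu> \<in> spec A"
  shows "Re \<mu> < 0"
proof -
  obtain a b where nz: "\<exists>i<n. a i \<noteq> 0 \<or> b i \<noteq> 0"
    and eq: "quad_form A a + quad_form A b = Re \<mu> * (sum_squares n a + sum_squares n b)"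
    using eigenvalue_Re_quad_form[OF A] assms(3) unfolding spec_def by blast
  have "quad_form A a + quad_form A b < 0"
    using nz neg_defD[OF A nd] neg_def_quad_form_nonpos[OF A nd]
    by (meson add_neg_nonpos add_nonpos_neg)
  moreover have "0 \<le> sum_squares n a + sum_squares n b"
    by (simp add: sum_squares_nonneg)
  ultimately show ?thesis
    using eq by (metis mult_nonneg_nonneg not_less)
qed

lemma spec_eq_spectrum: "spec A = spectrum (map_mat complex_of_real A)"
  unfolding spec_def spectrum_def by simp

lemma finite_lam: "A \<in> carrier_mat n n \<Longrightarrow> finite (lam A)"
  unfolding lam_def spec_eq_spectrum by (simp add: card_finite_spectrum(1))

lemma lam_nonempty: "A \<in> carrier_mat n n \<Longrightarrow> 0 < n \<Longrightarrow> lam A \<noteq> {}"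
  unfolding lam_def spec_eq_spectrum using spectrum_non_empty[of "map_mat complex_of_real A" n] by simp

lemma max_lam_neg_iff:
  assumes "A \<in> carrier_mat n n" and "0 < n"
  shows "max_lam A < 0 \<longleftrightarrow> (\<forall>\<mu>\<in>spec A. Re \<mu> < 0)"
  unfolding max_lam_def using finite_lam[OF assms(1)] lam_nonempty[OF assms] by (simp add: lam_def)

lemma min_lam_neg_iff:
  assumes "A \<in> carrier_mat n n" and "0 < n"
  shows "min_lam A < 0 \<longleftrightarrow> (\<exists>\<mu>\<in>spec A. Re \<mu> < 0)"
  unfolding min_lam_def using finite_lam[OF assms(1)] lam_nonempty[OF assms] by (simp add: lam_def Min_less_iff)

lemma max_lam_neg_imp_min_lam_neg:
  assumes "A \<in> carrier_mat n n" and "0 < n" and "max_lam A < 0"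
  shows "min_lam A < 0"
  using assms(3) finite_lam[OF assms(1)] lam_nonempty[OF assms(1,2)] unfolding min_lam_def max_lam_def
  by (meson Max_ge Min_in le_less_trans)

lemma neg_def_imp_max_lam_neg:
  assumes "A \<in> carrier_mat n n" and "0 < n" and "neg_def A"
  shows "max_lam A < 0"
  using neg_def_imp_spec_Re_neg[OF assms(1,3)] max_lam_neg_iff[OF assms(1,2)] by blast

lemma min_lam_neg_imp_quad_form_neg:
  assumes "A \<in> carrier_mat n n" and "0 < n" and "min_lam A < 0"
  shows "\<exists>x. quad_form A x < 0"
  using spec_Re_neg_imp_quad_form_neg[OF assms(1)] min_lam_neg_iff[OF assms(1,2)] assms(3) by blast

lemma lam_upper_triangular:
  assumes A: "A \<in> carrier_mat n n" and ut: "upper_triangular A"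
  shows "lam A = set (diag_mat A)"
proof -
  let ?C = "map_mat complex_of_real A"
  have C: "?C \<in> carrier_mat n n" and ut_C: "upper_triangular ?C"
    using A ut unfolding upper_triangular_def by auto
  have "spec A = set (diag_mat ?C)"
    unfolding spec_def eigenvalue_root_char_poly[OF C] char_poly_upper_triangular[OF C ut_C]
    by (auto simp: poly_prod_list prod_list_zero_iff)
  also have "diag_mat ?C = map complex_of_real (diag_mat A)"
    using A unfolding diag_mat_def by simp
  finally show ?thesis
    unfolding lam_def by (simp add: image_image)
qed

lemma quad_form_neg_imp_min_lam_sym_part_neg:
  assumes H: "H \<in> carrier_mat n n" and x: "quad_form H x < 0"
  shows "min_lam (sym_part H) < 0"
proof -
  have S: "sym_part H \<in> carrier_mat n n"
    using H unfolding sym_part_def by simp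
  have "transpose_mat (sym_part H) = sym_part H"
    using H unfolding sym_part_def by (intro eq_matI) auto
  moreover have "quad_form (sym_part H) x < 0"
    using x quad_form_sym_part[OF H] by simp
  ultimately obtain m where "m < 0" and "eigenvalue (sym_part H) m"
    using symmetric_quad_form_neg_imp_neg_eigenvalue[OF S] by blast
  moreover from this have "complex_of_real m \<in> spec (sym_part H)"
    unfolding spec_def using of_real_hom.eigenvalue_hom[OF S] by simp
  moreover have "0 < n"
    using x H by (cases n) (auto simp: quad_form_def)
  ultimately show ?thesis
    using min_lam_neg_iff[OF S] by force
qed

section \<open>The block-diagonal part\<close>

definition in_block :: "nat list \<Rightarrow> nat \<Rightarrow> nat \<Rightarrow> bool" where
  "in_block ds k r \<longleftrightarrow> block_offset ds k \<le> r \<and> r < block_offset ds (Suc k)"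

definition block_restrict :: "nat list \<Rightarrow> nat \<Rightarrow> (nat \<Rightarrow> 'a :: zero) \<Rightarrow> nat \<Rightarrow> 'a" where
  "block_restrict ds k x r = (if in_block ds k r then x r else 0)"

lemma block_offset_mono: "k \<le> l \<Longrightarrow> block_offset ds k \<le> block_offset ds l"
  unfolding block_offset_def by (metis le_add_diff_inverse le_add1 sum_list_append take_add)

lemma in_block_unique: "in_block ds k r \<Longrightarrow> in_block ds l r \<Longrightarrow> k = l"
  unfolding in_block_def
  by (metis Suc_leI block_offset_mono le_less_trans linorder_neqE_nat not_le)

lemma in_block_exists: "r < sum_list ds \<Longrightarrow> \<exists>k<length ds. in_block ds k r"
proof (induction ds arbitrary: r)
  case Nil
  thus ?case by simp
next
  case (Cons d ds)
  show ?case
  proof (cases "r < d")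
    case True
    hence "in_block (d # ds) 0 r"
      unfolding in_block_def block_offset_def by simp
    thus ?thesis by auto
  next
    case False
    hence "r - d < sum_list ds"
      using Cons.prems by simp
    then obtain k where "k < length ds" "in_block ds k (r - d)"
      using Cons.IH by blast
    moreover from this have "in_block (d # ds) (Suc k) r"
      using False unfolding in_block_def block_offset_def by auto
    ultimately show ?thesis by auto
  qed
qed

lemma same_block_iff_in_block: "same_block ds r c \<longleftrightarrow> (\<exists>k<length ds. in_block ds k r \<and> in_block ds k c)"
  unfolding same_block_def in_block_def by auto

lemma sum_in_block_indicator:
  "(\<Sum>k<length ds. if in_block ds k i \<and> in_block ds k j then X else 0) = (if same_block ds i j then X else 0)"
proof (cases "same_block ds i j")
  case True
  then obtain k0 where k0: "k0 < length ds" "in_block ds k0 i" "in_block ds k0 j"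
    unfolding same_block_iff_in_block by blast
  have "(\<Sum>k<length ds. if in_block ds k i \<and> in_block ds k j then X else 0)
      = (\<Sum>k<length ds. if k = k0 then X else 0)"
    using k0 in_block_unique by (intro sum.cong refl) metis
  thus ?thesis
    using True k0(1) by simp
next
  case False
  thus ?thesis
    unfolding same_block_iff_in_block by (intro trans[OF sum.neutral]) auto
qed

lemma quad_form_block_diag_part:
  assumes H: "H \<in> carrier_mat n n"
  shows "quad_form (block_diag_part ds H) x = (\<Sum>k<length ds. quad_form H (block_restrict ds k x))"
proof -
  have "(\<Sum>k<length ds. quad_form H (block_restrict ds k x))
      = (\<Sum>k<length ds. \<Sum>i<n. \<Sum>j<n. if in_block ds k i \<and> in_block ds k j then x i * H $$ (i, j) * x j else 0)"
    unfolding quad_form_def block_restrict_def using H by (intro sum.cong refl) auto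
  also have "\<dots> = (\<Sum>i<n. \<Sum>j<n. \<Sum>k<length ds. if in_block ds k i \<and> in_block ds k j then x i * H $$ (i, j) * x j else 0)"
    by (subst sum.swap) (subst (2) sum.swap, rule refl)
  also have "\<dots> = quad_form (block_diag_part ds H) x"
    unfolding sum_in_block_indicator quad_form_def block_diag_part_def using H by (intro sum.cong refl) auto
  finally show ?thesis ..
qed

lemma neg_def_block_diag_part:
  assumes H: "H \<in> carrier_mat (sum_list ds) (sum_list ds)" and nd: "neg_def H"
  shows "neg_def (block_diag_part ds H)"
proof (rule neg_defI)
  show "block_diag_part ds H \<in> carrier_mat (sum_list ds) (sum_list ds)"
    using H unfolding block_diag_part_def by simp
  fix x :: "nat \<Rightarrow> real" assume "\<exists>i<sum_list ds. x i \<noteq> 0"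
  then obtain i k0 where i: "i < sum_list ds" "x i \<noteq> 0" and k0: "k0 < length ds" "in_block ds k0 i"
    using in_block_exists by blast
  have "quad_form H (block_restrict ds k0 x) < 0"
    using i k0(2) by (intro neg_defD[OF H nd]) (auto simp: block_restrict_def)
  moreover have "(\<Sum>k\<in>{..<length ds} - {k0}. quad_form H (block_restrict ds k x)) \<le> 0"
    by (intro sum_nonpos neg_def_quad_form_nonpos[OF H nd])
  ultimately show "quad_form (block_diag_part ds H) x < 0"
    unfolding quad_form_block_diag_part[OF H] using k0(1) by (simp add: sum.remove)
qed

lemma quad_form_block_diag_part_neg:
  assumes "H \<in> carrier_mat n n" and "quad_form (block_diag_part ds H) x < 0"
  shows "\<exists>k. quad_form H (block_restrict ds k x) < 0"
  using assms quad_form_block_diag_part[of H n ds x] sum_nonneg[of "{..<length ds}"]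
  by (metis not_less)

lemma block_diag_part_diag:
  assumes "H \<in> carrier_mat (sum_list ds) (sum_list ds)" and "i < sum_list ds"
  shows "block_diag_part ds H $$ (i, i) = H $$ (i, i)"
  using assms in_block_exists[of i ds] unfolding block_diag_part_def same_block_iff_in_block by auto

lemma upper_triangular_block_diag_part:
  "H \<in> carrier_mat n n \<Longrightarrow> upper_triangular H \<Longrightarrow> upper_triangular (block_diag_part ds H)"
  unfolding upper_triangular_def block_diag_part_def by auto

lemma diag_mat_block_diag_part:
  "H \<in> carrier_mat (sum_list ds) (sum_list ds) \<Longrightarrow> diag_mat (block_diag_part ds H) = diag_mat H"
  using block_diag_part_diag[of H ds] unfolding diag_mat_def block_diag_part_def by simp

lemma lam_block_diag_part_upper_triangular:
  assumes "H \<in> carrier_mat (sum_list ds) (sum_list ds)" and "upper_triangular H"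
  shows "lam (block_diag_part ds H) = lam H"
proof -
  have "block_diag_part ds H \<in> carrier_mat (sum_list ds) (sum_list ds)"
    using assms(1) unfolding block_diag_part_def by simp
  thus ?thesis
    using assms by (simp add: lam_upper_triangular upper_triangular_block_diag_part diag_mat_block_diag_part)
qed

section \<open>Trace\<close>

definition mat_trace :: "'a :: comm_ring_1 mat \<Rightarrow> 'a" where
  "mat_trace A = (\<Sum>i<dim_row A. A $$ (i, i))"

lemma mat_trace_mult_comm:
  assumes "X \<in> carrier_mat n m" and "Y \<in> carrier_mat m n"
  shows "mat_trace (X * Y) = mat_trace (Y * X)"
proof -
  have "mat_trace (X * Y) = (\<Sum>i<n. \<Sum>k<m. X $$ (i, k) * Y $$ (k, i))"
    using assms unfolding mat_trace_def by (simp add: scalar_prod_def lessThan_atLeast0)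
  also have "\<dots> = (\<Sum>k<m. \<Sum>i<n. Y $$ (k, i) * X $$ (i, k))"
    by (subst sum.swap) (simp add: mult.commute)
  also have "\<dots> = mat_trace (Y * X)"
    using assms unfolding mat_trace_def by (simp add: scalar_prod_def lessThan_atLeast0)
  finally show ?thesis .
qed

lemma mat_trace_similar_mat_wit:
  assumes "similar_mat_wit A B P Q"
  shows "mat_trace A = mat_trace B"
proof -
  obtain n where "A \<in> carrier_mat n n" "B \<in> carrier_mat n n" "P \<in> carrier_mat n n" "Q \<in> carrier_mat n n"
    and QP: "Q * P = 1\<^sub>m n" and A: "A = P * B * Q"
    using assms unfolding similar_mat_wit_def Let_def by auto
  moreover from this have "mat_trace (P * (B * Q)) = mat_trace (B * Q * P)"
    by (intro mat_trace_mult_comm) auto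
  ultimately show ?thesis
    by (simp add: assoc_mult_mat[of _ n n _ n _ n])
qed

lemma mat_trace_eq_sum_eigenvalues:
  fixes A :: "complex mat"
  assumes A: "A \<in> carrier_mat n n" and cp: "char_poly A = (\<Prod>e\<leftarrow>es. [:- e, 1:])"
  shows "mat_trace A = sum_list es"
proof -
  obtain B P Q where BPQ: "schur_decomposition A es = (B, P, Q)"
    by (metis prod_cases3)
  with schur_decomposition[OF A cp] have sim: "similar_mat_wit A B P Q" and diag: "diag_mat B = es"
    by auto
  have "mat_trace A = mat_trace B"
    using sim by (rule mat_trace_similar_mat_wit)
  also have "\<dots> = sum_list (diag_mat B)"
    unfolding mat_trace_def diag_mat_def by (simp add: sum_set_upt_conv_sum_list_nat[symmetric] lessThan_atLeast0)
  finally show ?thesis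
    unfolding diag .
qed

lemma mat_trace_eq_sum_Re_spec:
  assumes A: "A \<in> carrier_mat n n"
  obtains e where "\<And>i. i < n \<Longrightarrow> e i \<in> spec A" and "mat_trace A = (\<Sum>i<n. Re (e i))"
proof -
  let ?C = "map_mat complex_of_real A"
  have C: "?C \<in> carrier_mat n n"
    using A by simp
  obtain es where cp: "char_poly ?C = (\<Prod>e\<leftarrow>es. [:- e, 1:])" and len: "length es = n"
    using char_poly_factorized[OF C] by blast
  have "es ! i \<in> spec A" if "i < n" for i
  proof -
    have "poly (char_poly ?C) (es ! i) = 0"
      unfolding cp poly_prod_list using that len by (auto simp: prod_list_zero_iff)
    thus ?thesis
      unfolding spec_def using eigenvalue_root_char_poly[OF C] by simp
  qed
  moreover have "complex_of_real (mat_trace A) = sum_list es"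
    using A mat_trace_eq_sum_eigenvalues[OF C cp] by (simp add: mat_trace_def)
  hence "mat_trace A = (\<Sum>i<n. Re (es ! i))"
    using len by (metis Re_complex_of_real Re_sum sum_list_sum_nth lessThan_atLeast0)
  ultimately show ?thesis
    using that by blast
qed

lemma max_lam_neg_imp_mat_trace_neg:
  assumes A: "A \<in> carrier_mat n n" and n: "0 < n" and "max_lam A < 0"
  shows "mat_trace A < 0"
proof -
  obtain e where e: "\<And>i. i < n \<Longrightarrow> e i \<in> spec A" and tr: "mat_trace A = (\<Sum>i<n. Re (e i))"
    using mat_trace_eq_sum_Re_spec[OF A] by blast
  have "(\<Sum>i<n. Re (e i)) < (\<Sum>i<n. 0)"
    using n e assms(3) max_lam_neg_iff[OF A n] by (intro sum_strict_mono) auto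
  thus ?thesis
    using tr by simp
qed

lemma mat_trace_neg_imp_min_lam_neg:
  assumes A: "A \<in> carrier_mat n n" and tr: "mat_trace A < 0"
  shows "min_lam A < 0"
proof -
  obtain e where e: "\<And>i. i < n \<Longrightarrow> e i \<in> spec A" and tr_eq: "mat_trace A = (\<Sum>i<n. Re (e i))"
    using mat_trace_eq_sum_Re_spec[OF A] by blast
  have "\<not> (\<forall>i<n. 0 \<le> Re (e i))"
    using tr tr_eq sum_nonneg[of "{..<n}" "\<lambda>i. Re (e i)"] by auto
  then obtain i where "i < n" "Re (e i) < 0"
    by (auto simp: not_le)
  thus ?thesis
    using e min_lam_neg_iff[OF A] by fastforce
qed

lemma mat_trace_block_diag_part:
  assumes "H \<in> carrier_mat (sum_list ds) (sum_list ds)"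
  shows "mat_trace (block_diag_part ds H) = mat_trace H"
  using assms block_diag_part_diag[OF assms] unfolding mat_trace_def block_diag_part_def by simp

lemma partitioned_implications:
  assumes P: "partitioned ds H"
  defines "Hd \<equiv> block_diag_part ds H"
  shows "(neg_def H \<longrightarrow> max_lam H < 0) \<and>
      (neg_def H \<longrightarrow> max_lam Hd < 0) \<and>
      (max_lam H < 0 \<longrightarrow> min_lam H < 0) \<and>
      (max_lam Hd < 0 \<longrightarrow> min_lam Hd < 0) \<and>
      (max_lam H < 0 \<longrightarrow> min_lam Hd < 0) \<and>
      (max_lam Hd < 0 \<longrightarrow> min_lam H < 0) \<and>
      (min_lam H < 0 \<longrightarrow> min_lam (sym_part H) < 0) \<and>
      (min_lam Hd < 0 \<longrightarrow> min_lam (sym_part H) < 0)"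
proof -
  define n where "n = sum_list ds"
  have H: "H \<in> carrier_mat n n"
    using P unfolding partitioned_def n_def by simp
  have Hd: "Hd \<in> carrier_mat n n"
    using H unfolding Hd_def block_diag_part_def by simp
  have n: "0 < n"
    using P unfolding partitioned_def n_def by (cases ds) auto
  have tr: "mat_trace Hd = mat_trace H"
    using H unfolding Hd_def n_def by (rule mat_trace_block_diag_part)
  have "neg_def H \<longrightarrow> max_lam Hd < 0"
    using neg_def_imp_max_lam_neg[OF Hd n] neg_def_block_diag_part[of H ds] H unfolding Hd_def n_def by blast
  moreover have "max_lam H < 0 \<longrightarrow> min_lam Hd < 0"
    using max_lam_neg_imp_mat_trace_neg[OF H n] mat_trace_neg_imp_min_lam_neg[OF Hd] tr by simp
  moreover have "max_lam Hd < 0 \<longrightarrow> min_lam H < 0"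
    using max_lam_neg_imp_mat_trace_neg[OF Hd n] mat_trace_neg_imp_min_lam_neg[OF H] tr by simp
  moreover have "min_lam H < 0 \<longrightarrow> min_lam (sym_part H) < 0"
    using min_lam_neg_imp_quad_form_neg[OF H n] quad_form_neg_imp_min_lam_sym_part_neg[OF H] by blast
  moreover have "min_lam Hd < 0 \<longrightarrow> min_lam (sym_part H) < 0"
    using min_lam_neg_imp_quad_form_neg[OF Hd n] quad_form_block_diag_part_neg[OF H]
      quad_form_neg_imp_min_lam_sym_part_neg[OF H] unfolding Hd_def by blast
  ultimately show ?thesis
    using neg_def_imp_max_lam_neg[OF H n] max_lam_neg_imp_min_lam_neg[OF H n]
      max_lam_neg_imp_min_lam_neg[OF Hd n] by blast
qed

definition upper_tri2 :: "real \<Rightarrow> real \<Rightarrow> real \<Rightarrow> real mat" where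
  "upper_tri2 a b c = mat_of_rows_list 2 [[a, b], [0, c]]"

lemma upper_tri2_carrier: "upper_tri2 a b c \<in> carrier_mat 2 2"
  unfolding upper_tri2_def mat_of_rows_list_def by (simp add: numeral_2_eq_2)

lemma upper_triangular_upper_tri2: "upper_triangular (upper_tri2 a b c)"
  unfolding upper_triangular_def upper_tri2_def mat_of_rows_list_def by (auto simp: less_Suc_eq)

lemma partitioned_upper_tri2 [simp]:
  "\<forall>k\<in>set ds. 0 < k \<Longrightarrow> sum_list ds = 2 \<Longrightarrow> partitioned ds (upper_tri2 a b c)"
  unfolding partitioned_def using upper_tri2_carrier by auto

lemma lam_upper_tri2: "lam (upper_tri2 a b c) = {a, c}"
  unfolding lam_upper_triangular[OF upper_tri2_carrier upper_triangular_upper_tri2]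
  by (simp add: upper_tri2_def mat_of_rows_list_def diag_mat_def upt_rec)

lemma lam_block_diag_part_upper_tri2:
  "sum_list ds = 2 \<Longrightarrow> lam (block_diag_part ds (upper_tri2 a b c)) = {a, c}"
  using lam_block_diag_part_upper_triangular[of "upper_tri2 a b c" ds]
    upper_tri2_carrier[of a b c] upper_triangular_upper_tri2[of a b c] lam_upper_tri2
  by simp

lemma min_max_lam_upper_tri2 [simp]:
  "min_lam (upper_tri2 a b c) = min a c"
  "max_lam (upper_tri2 a b c) = max a c"
  "sum_list ds = 2 \<Longrightarrow> min_lam (block_diag_part ds (upper_tri2 a b c)) = min a c"
  "sum_list ds = 2 \<Longrightarrow> max_lam (block_diag_part ds (upper_tri2 a b c)) = max a c"
  by (simp_all add: min_lam_def max_lam_def lam_upper_tri2 lam_block_diag_part_upper_tri2)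

lemma quad_form_upper_tri2:
  "quad_form (upper_tri2 a b c) x = a * (x 0)\<^sup>2 + b * x 0 * x 1 + c * (x 1)\<^sup>2"
  unfolding quad_form_def upper_tri2_def mat_of_rows_list_def
  by (simp add: numeral_2_eq_2 lessThan_Suc power2_eq_square algebra_simps)

lemma not_neg_def_upper_tri2 [simp]:
  assumes "0 \<le> a + b + c"
  shows "\<not> neg_def (upper_tri2 a b c)"
proof
  assume "neg_def (upper_tri2 a b c)"
  hence "quad_form (upper_tri2 a b c) (\<lambda>_. 1) < 0"
    by (rule neg_defD[OF upper_tri2_carrier]) (auto intro!: exI[of _ 0])
  thus False
    using assms by (simp add: quad_form_upper_tri2)
qed

lemma min_lam_sym_part_upper_tri2 [simp]:
  assumes "a - b + c < 0"
  shows "min_lam (sym_part (upper_tri2 a b c)) < 0"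
proof (rule quad_form_neg_imp_min_lam_sym_part_neg[OF upper_tri2_carrier])
  show "quad_form (upper_tri2 a b c) (\<lambda>i. if i = 0 then 1 else -1) < 0"
    using assms by (simp add: quad_form_upper_tri2)
qed

theorem proposition2:
  shows "(\<forall>ds H. partitioned ds H \<longrightarrow>
      (neg_def H \<longrightarrow> max_lam H < 0) \<and>
      (neg_def H \<longrightarrow> max_lam (block_diag_part ds H) < 0) \<and>
      (max_lam H < 0 \<longrightarrow> min_lam H < 0) \<and>
      (max_lam (block_diag_part ds H) < 0 \<longrightarrow> min_lam (block_diag_part ds H) < 0) \<and>
      (max_lam H < 0 \<longrightarrow> min_lam (block_diag_part ds H) < 0) \<and>
      (max_lam (block_diag_part ds H) < 0 \<longrightarrow> min_lam H < 0) \<and>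
      (min_lam H < 0 \<longrightarrow> min_lam (sym_part H) < 0) \<and>
      (min_lam (block_diag_part ds H) < 0 \<longrightarrow> min_lam (sym_part H) < 0))
   \<and> (\<exists>ds H. partitioned ds H \<and> max_lam H < 0 \<and> \<not> neg_def H)
   \<and> (\<exists>ds H. partitioned ds H \<and> max_lam (block_diag_part ds H) < 0 \<and> \<not> neg_def H)
   \<and> (\<exists>ds H. partitioned ds H \<and> min_lam H < 0 \<and> \<not> max_lam H < 0)
   \<and> (\<exists>ds H. partitioned ds H \<and> min_lam (block_diag_part ds H) < 0 \<and>
                 \<not> max_lam (block_diag_part ds H) < 0)
   \<and> (\<exists>ds H. partitioned ds H \<and> min_lam (block_diag_part ds H) < 0 \<and> \<not> max_lam H < 0)
   \<and> (\<exists>ds H. partitioned ds H \<and> min_lam H < 0 \<and> \<not> max_lam (block_diag_part ds H) < 0)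
   \<and> (\<exists>ds H. partitioned ds H \<and> min_lam (sym_part H) < 0 \<and> \<not> min_lam H < 0)
   \<and> (\<exists>ds H. partitioned ds H \<and> min_lam (sym_part H) < 0 \<and>
                 \<not> min_lam (block_diag_part ds H) < 0)"
  apply (intro conjI)
  subgoal using partitioned_implications by blast
  subgoal by (intro exI[of _ "[1, 1]"] exI[of _ "upper_tri2 (-1) 10 (-1)"]) simp
  subgoal by (intro exI[of _ "[1, 1]"] exI[of _ "upper_tri2 (-1) 10 (-1)"]) simp
  subgoal by (intro exI[of _ "[1, 1]"] exI[of _ "upper_tri2 (-1) 0 1"]) simp
  subgoal by (intro exI[of _ "[1, 1]"] exI[of _ "upper_tri2 (-1) 0 1"]) simp
  subgoal by (intro exI[of _ "[1, 1]"] exI[of _ "upper_tri2 (-1) 0 1"]) simp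
  subgoal by (intro exI[of _ "[1, 1]"] exI[of _ "upper_tri2 (-1) 0 1"]) simp
  subgoal by (intro exI[of _ "[1, 1]"] exI[of _ "upper_tri2 1 10 1"]) simp
  subgoal by (intro exI[of _ "[1, 1]"] exI[of _ "upper_tri2 1 10 1"]) simp
  done

end
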